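(* Let $I\subseteq\mathbb{N}$ and let $(\mathcal{G}_N)_{N\in I}$ be a sequence of symmetric connected graphs with $\mathcal{G}_N=(\mathcal{V}_N,\mathcal{E}_N)$ and $|\mathcal{V}_N|=N$, with maximum degree $\deg_{\max}(N)$ and spectral gap $\lambda_1(N)$. Fix $q\in(0,1)$. If $\deg_{\max}(N)^2/\lambda_1(N)=o(N)$ as $N\to+\infty$, then the BGA with mixing parameter $q$ is asymptotically unbiased on this sequence, i.e. $\lim_{N\to+\infty}\mathbb{E}[\beta(\infty)]=0$, where $\mathbb{E}[\beta(\infty)]$ is computed for the BGA run on $\mathcal{G}_N$.
   Context: Graph and neighborhoods: for a graph $\mathcal{G}=(\mathcal{V},\mathcal{E})$ with $\mathcal{E}\subset\mathcal{V}\times\mathcal{V}$ and $N=|\mathcal{V}|$, the out-neighborhood of $v$ is $\mathcal{N}^+_v=\{u\in\mathcal{V}:(u,v)\in\mathcal{E}\}$ and the in-neighborhood is $\mathcal{N}^-_v=\{u\in\mathcal{V}:(v,u)\in\mathcal{E}\}$; $\deg^\pm_v=|\mathcal{N}^\pm_v|$, $\deg_{\max}=\max_v\max\{\deg^+_v,\deg^-_v\}$. The graph is symmetric if $\mathcal{N}^+_v=\mathcal{N}^-_v$ for all $v$. The spectral gap $\lambda_1$ is the smallest nonzero eigenvalue (in modulus) of the Laplacian matrix. BGA: given initial values $x_v(0)\in[0,L]$ and a mixing parameter $q\in(0,1)$, at each time $t\in\mathbb{Z}_{\ge0}$ one node $v$ is sampled uniformly at random from $\mathcal{V}$ (independently over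 time); every $u\in\mathcal{N}^+_v$ updates $x_u(t+1)=(1-q)x_u(t)+q\,x_v(t)$, and every $u\notin\mathcal{N}^+_v$ keeps $x_u(t+1)=x_u(t)$. Notation: $x_{\mathrm{ave}}(t)=N^{-1}\sum_v x_v(t)$, $\beta(t)=|x_{\mathrm{ave}}(t)-x_{\mathrm{ave}}(0)|^2$, $\mathbb{E}[\beta(\infty)]:=\lim_{t\to\infty}\mathbb{E}[\beta(t)]$. The BGA is asymptotically unbiased if $\lim_{N\to+\infty}\mathbb{E}[\beta(\infty)]=0$. *)

theory Defs
  imports "HOL-Probability.Probability" "HOL-Library.Landau_Symbols"
    "Jordan_Normal_Form.Char_Poly"
begin

text \<open>A graph on the vertex set V = {0..<N} is given by a relation E :: nat => nat => bool;
  E u v means (u,v) is an edge. Only vertices below N are relevant.\<close>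

definition out_nbhd :: "nat \<Rightarrow> (nat \<Rightarrow> nat \<Rightarrow> bool) \<Rightarrow> nat \<Rightarrow> nat set" where
  "out_nbhd N E v = {u. u < N \<and> E u v}"

definition in_nbhd :: "nat \<Rightarrow> (nat \<Rightarrow> nat \<Rightarrow> bool) \<Rightarrow> nat \<Rightarrow> nat set" where
  "in_nbhd N E v = {u. u < N \<and> E v u}"

definition deg_max :: "nat \<Rightarrow> (nat \<Rightarrow> nat \<Rightarrow> bool) \<Rightarrow> nat" where
  "deg_max N E = Max ((\<lambda>v. max (card (out_nbhd N E v)) (card (in_nbhd N E v))) ` {..<N})"

definition symmetric_graph :: "nat \<Rightarrow> (nat \<Rightarrow> nat \<Rightarrow> bool) \<Rightarrow> bool" where
  "symmetric_graph N E \<longleftrightarrow> (\<forall>v<N. out_nbhd N E v = in_nbhd N E v)"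

definition connected_graph :: "nat \<Rightarrow> (nat \<Rightarrow> nat \<Rightarrow> bool) \<Rightarrow> bool" where
  "connected_graph N E \<longleftrightarrow> 0 < N \<and>
     (\<forall>u<N. \<forall>v<N. (u, v) \<in> {(a, b). a < N \<and> b < N \<and> E a b}\<^sup>*)"

definition laplacian :: "nat \<Rightarrow> (nat \<Rightarrow> nat \<Rightarrow> bool) \<Rightarrow> real mat" where
  "laplacian N E = mat N N (\<lambda>(i, j).
      (if i = j then real (card (out_nbhd N E i)) else 0) - (if E i j then 1 else 0))"

definition spectral_gap :: "nat \<Rightarrow> (nat \<Rightarrow> nat \<Rightarrow> bool) \<Rightarrow> real" where
  "spectral_gap N E = Min {cmod k | k. eigenvalue (map_mat complex_of_real (laplacian N E)) k \<and> k \<noteq> 0}"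

definition bga_step :: "nat \<Rightarrow> (nat \<Rightarrow> nat \<Rightarrow> bool) \<Rightarrow> real \<Rightarrow> nat \<Rightarrow> (nat \<Rightarrow> real) \<Rightarrow> (nat \<Rightarrow> real)" where
  "bga_step N E q v x = (\<lambda>u. if u \<in> out_nbhd N E v then (1 - q) * x u + q * x v else x u)"

fun bga_dist :: "nat \<Rightarrow> (nat \<Rightarrow> nat \<Rightarrow> bool) \<Rightarrow> real \<Rightarrow> (nat \<Rightarrow> real) \<Rightarrow> nat \<Rightarrow> (nat \<Rightarrow> real) pmf" where
  "bga_dist N E q x0 0 = return_pmf x0"
| "bga_dist N E q x0 (Suc t) =
     bind_pmf (bga_dist N E q x0 t) (\<lambda>x. map_pmf (\<lambda>v. bga_step N E q v x) (pmf_of_set {..<N}))"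

definition x_ave :: "nat \<Rightarrow> (nat \<Rightarrow> real) \<Rightarrow> real" where
  "x_ave N x = (\<Sum>v<N. x v) / real N"

definition expected_beta :: "nat \<Rightarrow> (nat \<Rightarrow> nat \<Rightarrow> bool) \<Rightarrow> real \<Rightarrow> (nat \<Rightarrow> real) \<Rightarrow> nat \<Rightarrow> real" where
  "expected_beta N E q x0 t =
     measure_pmf.expectation (bga_dist N E q x0 t) (\<lambda>x. (x_ave N x - x_ave N x0)\<^sup>2)"

definition expected_beta_inf :: "nat \<Rightarrow> (nat \<Rightarrow> nat \<Rightarrow> bool) \<Rightarrow> real \<Rightarrow> (nat \<Rightarrow> real) \<Rightarrow> real" where
  "expected_beta_inf N E q x0 = lim (expected_beta N E q x0)"

end

theory Submission
  imports Defs "Jordan_Normal_Form.Spectral_Radius"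
begin

(* The proof has a probabilistic half, valid for one fixed symmetric graph, and a spectral half.

   When node v broadcasts, the average moves by (q/N) s_v(x), where
   s_v(x) = sum over edges u -> v of (x_v - x_u) is the drift at v.  On a symmetric graph the
   drifts sum to zero, so E[beta(t)] is nondecreasing.  The energy W(x) = sum_u x_u^2 drops in
   one-step expectation by q(1-q)/N times the disagreement Q(x) = sum over edges of
   (x_v - x_u)^2, while Cauchy-Schwarz gives sum_v s_v(x)^2 <= D Q(x) when all degrees are at
   most D.  Hence Phi = (x_ave - x_ave(0))^2 + alpha W with alpha = qD/((1-q)N^2) is a
   supermartingale, and E[beta(t)] <= Phi(x(0)) <= q D L^2/((1-q)N).  Being nondecreasing and
   bounded, E[beta(t)] converges and E[beta(infinity)] obeys the same bound.

   For a connected graph on N >= 2 vertices the Laplacian has positive trace;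
   as the trace is the sum of the eigenvalues (Schur decomposition), a nonzero eigenvalue
   exists, so the spectral gap lambda_1 is positive, and a row-sum estimate bounds it by
   2 deg_max.  Thus deg_max <= 2 deg_max^2/lambda_1, so the bias is O(deg_max^2/(lambda_1 N)),
   which tends to 0 by hypothesis. *)


unbundle no vec_syntax


section \<open>Expectations along the BGA process\<close>

definition step_mean :: "nat \<Rightarrow> (nat \<Rightarrow> nat \<Rightarrow> bool) \<Rightarrow> real \<Rightarrow> ((nat \<Rightarrow> real) \<Rightarrow> real)
    \<Rightarrow> (nat \<Rightarrow> real) \<Rightarrow> real" where
  "step_mean N E q h x = (\<Sum>v<N. h (bga_step N E q v x)) / real N"

text \<open>The state distribution has finite support, so every observable is integrable.\<close>
lemma finite_set_bga_dist: "0 < N \<Longrightarrow> finite (set_pmf (bga_dist N E q x0 t))"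
proof (induction t)
  case (Suc t)
  have "set_pmf (pmf_of_set {..<N}) = {..<N}" using Suc.prems by (intro set_pmf_of_set) auto
  with Suc show ?case by auto
qed auto

lemma integrable_bga_dist:
  fixes h :: "(nat \<Rightarrow> real) \<Rightarrow> real"
  assumes "0 < N"
  shows "integrable (measure_pmf (bga_dist N E q x0 t)) h"
  using assms by (intro integrable_measure_pmf_finite finite_set_bga_dist)

lemma expectation_bga_dist_Suc:
  assumes "0 < N"
  shows "measure_pmf.expectation (bga_dist N E q x0 (Suc t)) h
       = measure_pmf.expectation (bga_dist N E q x0 t) (step_mean N E q h)"
proof -
  let ?p = "bga_dist N E q x0 t"
  have fin: "finite (set_pmf ?p)" using finite_set_bga_dist assms by blast
  have ne: "{..<N} \<noteq> {}" using assms by auto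
  have one_step: "measure_pmf.expectation (map_pmf (\<lambda>v. bga_step N E q v x) (pmf_of_set {..<N})) h
      = step_mean N E q h x" for x
    using ne by (simp add: integral_pmf_of_set step_mean_def)
  have "measure_pmf.expectation (bga_dist N E q x0 (Suc t)) h
     = (\<Sum>a\<in>set_pmf ?p. pmf ?p a *\<^sub>R measure_pmf.expectation
          (map_pmf (\<lambda>v. bga_step N E q v a) (pmf_of_set {..<N})) h)"
    by (simp only: bga_dist.simps, rule pmf_expectation_bind[OF fin], insert ne, auto)
  also have "\<dots> = (\<Sum>a\<in>set_pmf ?p. pmf ?p a *\<^sub>R step_mean N E q h a)" using one_step by simp
  also have "\<dots> = measure_pmf.expectation ?p (step_mean N E q h)"
    by (rule integral_measure_pmf[OF fin, symmetric]) auto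
  finally show ?thesis .
qed

lemma expectation_bga_dist_le_initial:
  assumes N: "0 < N" and super: "\<And>x. step_mean N E q g x \<le> g x"
  shows "measure_pmf.expectation (bga_dist N E q x0 t) g \<le> g x0"
proof (induction t)
  case (Suc t)
  have "measure_pmf.expectation (bga_dist N E q x0 (Suc t)) g
      \<le> measure_pmf.expectation (bga_dist N E q x0 t) g"
    unfolding expectation_bga_dist_Suc[OF N]
    by (rule integral_mono) (use N super integrable_bga_dist in auto)
  with Suc show ?case by linarith
qed simp

lemma expectation_bga_dist_incseq:
  assumes N: "0 < N" and sub: "\<And>x. g x \<le> step_mean N E q g x"
  shows "incseq (\<lambda>t. measure_pmf.expectation (bga_dist N E q x0 t) g)"
proof (rule incseq_SucI)
  fix t
  show "measure_pmf.expectation (bga_dist N E q x0 t) g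
      \<le> measure_pmf.expectation (bga_dist N E q x0 (Suc t)) g"
    unfolding expectation_bga_dist_Suc[OF N]
    by (rule integral_mono) (use N sub integrable_bga_dist in auto)
qed


section \<open>One BGA step on a symmetric graph\<close>

definition symmetric_edges :: "nat \<Rightarrow> (nat \<Rightarrow> nat \<Rightarrow> bool) \<Rightarrow> bool" where
  "symmetric_edges N E \<longleftrightarrow> (\<forall>u<N. \<forall>v<N. E u v = E v u)"

lemma symmetric_graph_edges: "symmetric_graph N E \<Longrightarrow> symmetric_edges N E"
  unfolding symmetric_graph_def symmetric_edges_def out_nbhd_def in_nbhd_def
  by (metis (mono_tags, lifting) mem_Collect_eq)

text \<open>Drift at v: total change of the node values when v broadcasts with
  q = 1.\<close>
definition drift :: "nat \<Rightarrow> (nat \<Rightarrow> nat \<Rightarrow> bool) \<Rightarrow> (nat \<Rightarrow> real) \<Rightarrow> nat \<Rightarrow> real" where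
  "drift N E x v = (\<Sum>u<N. if E u v then x v - x u else 0)"

definition energy :: "nat \<Rightarrow> (nat \<Rightarrow> real) \<Rightarrow> real" where
  "energy N x = (\<Sum>u<N. (x u)\<^sup>2)"

definition disagreement :: "nat \<Rightarrow> (nat \<Rightarrow> nat \<Rightarrow> bool) \<Rightarrow> (nat \<Rightarrow> real) \<Rightarrow> real" where
  "disagreement N E x = (\<Sum>v<N. \<Sum>u<N. if E u v then (x v - x u)\<^sup>2 else 0)"

lemma sum_indicator_card:
  "(\<Sum>j<(N::nat). if P j then 1 else 0 :: real) = real (card {j. j < N \<and> P j})"
proof -
  have "(\<Sum>j<N. if P j then 1 else 0 :: real) = (\<Sum>j\<in>{j\<in>{..<N}. P j}. 1)"
    by (rule sum.inter_filter[symmetric]) simp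
  also have "{j\<in>{..<N}. P j} = {j. j < N \<and> P j}" by auto
  finally show ?thesis by simp
qed

lemma bga_step_below:
  "u < N \<Longrightarrow> bga_step N E q v x u = x u + (if E u v then q * (x v - x u) else 0)"
  unfolding bga_step_def out_nbhd_def by (auto simp: algebra_simps)

lemma x_ave_bga_step: "x_ave N (bga_step N E q v x) = x_ave N x + q / real N * drift N E x v"
proof -
  have "(\<Sum>u<N. bga_step N E q v x u) = (\<Sum>u<N. x u) + q * drift N E x v"
    unfolding drift_def sum_distrib_left sum.distrib[symmetric]
    by (intro sum.cong refl) (auto simp: bga_step_below)
  thus ?thesis unfolding x_ave_def by (simp add: add_divide_distrib)
qed

text \<open>Each edge contributes opposite amounts to the drifts of its two endpoints.\<close>
lemma sum_drift_zero:
  assumes "symmetric_edges N E"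
  shows "(\<Sum>v<N. drift N E x v) = 0"
proof -
  let ?S = "\<Sum>v<N. drift N E x v"
  have "?S = (\<Sum>u<N. \<Sum>v<N. if E u v then x v - x u else 0)"
    unfolding drift_def by (rule sum.swap)
  also have "\<dots> = (\<Sum>u<N. \<Sum>v<N. - (if E v u then x u - x v else 0))"
    using assms unfolding symmetric_edges_def by (intro sum.cong refl) auto
  also have "\<dots> = - ?S" unfolding drift_def by (simp add: sum_negf)
  finally show ?thesis by simp
qed

lemma sum_energy_bga_step:
  assumes sym: "symmetric_edges N E"
  shows "(\<Sum>v<N. energy N (bga_step N E q v x)) = real N * energy N x - q * (1 - q) * disagreement N E x"
proof -
  define T where "T = (\<Sum>v<N. \<Sum>u<N. if E u v then x u * (x v - x u) else 0)"
  have T_swap: "T = (\<Sum>v<N. \<Sum>u<N. if E u v then x v * (x u - x v) else 0)"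
    unfolding T_def
    by (subst sum.swap) (use sym in \<open>auto simp: symmetric_edges_def intro!: sum.cong\<close>)
  have "T + T = - disagreement N E x"
    unfolding disagreement_def
    apply (subst (2) T_swap) unfolding T_def sum.distrib[symmetric] sum_negf[symmetric]
    by (intro sum.cong refl) (auto simp: power2_eq_square algebra_simps)
  hence T_eq: "T = - disagreement N E x / 2" by simp
  have per_node: "energy N (bga_step N E q v x) = energy N x +
      (\<Sum>u<N. if E u v then 2 * q * (x u * (x v - x u)) + q\<^sup>2 * (x v - x u)\<^sup>2 else 0)" for v
    unfolding energy_def sum.distrib[symmetric]
    by (intro sum.cong refl) (auto simp: bga_step_below power2_eq_square algebra_simps)
  have "(\<Sum>v<N. energy N (bga_step N E q v x)) = real N * energy N x
      + (\<Sum>v<N. \<Sum>u<N. if E u v then 2 * q * (x u * (x v - x u)) + q\<^sup>2 * (x v - x u)\<^sup>2 else 0)"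
    unfolding per_node sum.distrib by simp
  also have "(\<Sum>v<N. \<Sum>u<N. if E u v then 2 * q * (x u * (x v - x u)) + q\<^sup>2 * (x v - x u)\<^sup>2 else 0)
      = 2 * q * T + q\<^sup>2 * disagreement N E x"
    unfolding T_def disagreement_def sum_distrib_left sum.distrib[symmetric]
    by (intro sum.cong refl) auto
  finally show ?thesis unfolding T_eq by (simp add: power2_eq_square algebra_simps)
qed

lemma drift_square_le:
  "(drift N E x v)\<^sup>2 \<le> real (card {u. u < N \<and> E u v}) * (\<Sum>u<N. if E u v then (x v - x u)\<^sup>2 else 0)"
proof -
  have "(drift N E x v)\<^sup>2 = (\<Sum>u<N. (if E u v then 1 else 0) * (if E u v then x v - x u else 0))\<^sup>2"
    unfolding drift_def by (intro arg_cong[where f="\<lambda>t. t\<^sup>2"] sum.cong) auto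
  also have "\<dots> \<le> (\<Sum>u<N. (if E u v then 1 else (0::real))\<^sup>2) * (\<Sum>u<N. (if E u v then x v - x u else 0)\<^sup>2)"
    by (rule Cauchy_Schwarz_ineq_sum)
  also have "(\<Sum>u<N. (if E u v then 1 else (0::real))\<^sup>2) = real (card {u. u < N \<and> E u v})"
    unfolding sum_indicator_card[symmetric] by (intro sum.cong) auto
  also have "(\<Sum>u<N. (if E u v then x v - x u else 0)\<^sup>2) = (\<Sum>u<N. if E u v then (x v - x u)\<^sup>2 else 0)"
    by (intro sum.cong) auto
  finally show ?thesis .
qed

lemma sum_drift_squares_le:
  assumes D: "\<And>v. v < N \<Longrightarrow> real (card {u. u < N \<and> E u v}) \<le> D"
shows "(\<Sum>v<N. (drift N E x v)\<^sup>2) \<le> D * disagreement N E x"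
proof -
  have "(drift N E x v)\<^sup>2 \<le> D * (\<Sum>u<N. if E u v then (x v - x u)\<^sup>2 else 0)" if v: "v < N" for v
  proof -
    have "0 \<le> (\<Sum>u<N. if E u v then (x v - x u)\<^sup>2 else 0)" by (intro sum_nonneg) auto
    from mult_right_mono[OF D[OF v] this] show ?thesis
      using drift_square_le[of N E x v] by linarith
  qed
  then have "(\<Sum>v<N. (drift N E x v)\<^sup>2) \<le> (\<Sum>v<N. D * (\<Sum>u<N. if E u v then (x v - x u)\<^sup>2 else 0))"
    by (intro sum_mono) auto
  then show ?thesis unfolding disagreement_def by (simp add: sum_distrib_left)
qed


section \<open>A Lyapunov function and the per-graph bias bound\<close>

text \<open>The squared deviation of the average from any constant grows in one-step mean by
  exactly the mean squared drift (the linear term vanishes by sum_drift_zero).\<close>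
lemma step_mean_sq_deviation:
  assumes N: "0 < N" and sym: "symmetric_edges N E"
  shows "step_mean N E q (\<lambda>x. (x_ave N x - c)\<^sup>2) x
       = (x_ave N x - c)\<^sup>2 + (q / real N)\<^sup>2 * (\<Sum>v<N. (drift N E x v)\<^sup>2) / real N"
proof -
  let ?a = "x_ave N x - c"
  have "(\<Sum>v<N. (x_ave N (bga_step N E q v x) - c)\<^sup>2)
      = (\<Sum>v<N. ?a\<^sup>2 + 2 * ?a * (q / real N) * drift N E x v + (q / real N)\<^sup>2 * (drift N E x v)\<^sup>2)"
    by (intro sum.cong refl) (simp add: x_ave_bga_step power2_eq_square algebra_simps)
  also have "\<dots> = real N * ?a\<^sup>2 + 2 * ?a * (q / real N) * (\<Sum>v<N. drift N E x v)
                    + (q / real N)\<^sup>2 * (\<Sum>v<N. (drift N E x v)\<^sup>2)"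
    by (simp add: sum.distrib sum_distrib_left)
  also have "\<dots> = real N * ?a\<^sup>2 + (q / real N)\<^sup>2 * (\<Sum>v<N. (drift N E x v)\<^sup>2)"
    using sum_drift_zero[OF sym] by simp
  finally show ?thesis unfolding step_mean_def using N by (simp add: field_simps)
qed

text \<open>Adding the energy with weight alpha = qD/((1-q)N^2) absorbs the growth of the
  squared deviation, yielding a supermartingale function.\<close>
lemma step_mean_lyapunov_le:
  assumes N: "0 < N" and sym: "symmetric_edges N E" and q: "0 < q" "q < 1"
    and D: "\<And>v. v < N \<Longrightarrow> real (card {u. u < N \<and> E u v}) \<le> D"
  defines "\<alpha> \<equiv> q * D / ((1 - q) * real N ^ 2)"
  shows "step_mean N E q (\<lambda>x. (x_ave N x - c)\<^sup>2 + \<alpha> * energy N x) x \<le> (x_ave N x - c)\<^sup>2 + \<alpha> * energy N x"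
proof -
  let ?Q = "disagreement N E x"
  have split: "step_mean N E q (\<lambda>x. (x_ave N x - c)\<^sup>2 + \<alpha> * energy N x) x
     = step_mean N E q (\<lambda>x. (x_ave N x - c)\<^sup>2) x + \<alpha> * (\<Sum>v<N. energy N (bga_step N E q v x)) / real N"
    unfolding step_mean_def by (simp add: sum.distrib sum_distrib_left add_divide_distrib)
  have "(q / real N)\<^sup>2 * (\<Sum>v<N. (drift N E x v)\<^sup>2) \<le> (q / real N)\<^sup>2 * (D * ?Q)"
    by (rule mult_left_mono[OF sum_drift_squares_le[OF D] zero_le_power2])
  also have "\<dots> = \<alpha> * (q * (1 - q) * ?Q)"
    unfolding \<alpha>_def using q N by (simp add: field_simps power2_eq_square)
  finally have growth: "(q / real N)\<^sup>2 * (\<Sum>v<N. (drift N E x v)\<^sup>2) / real N \<le> \<alpha> * (q * (1 - q) * ?Q) / real N"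
    by (rule divide_right_mono) simp
  have dissipation: "\<alpha> * (real N * energy N x - q * (1 - q) * ?Q) / real N
     = \<alpha> * energy N x - \<alpha> * (q * (1 - q) * ?Q) / real N"
    using N by (simp add: field_simps)
  show ?thesis
    unfolding split step_mean_sq_deviation[OF N sym] sum_energy_bga_step[OF sym] dissipation
    using growth by linarith
qed

lemma incseq_bounded_lim:
  fixes X :: "nat \<Rightarrow> real"
  assumes inc: "incseq X" and bound: "\<And>t. X t \<le> B"
  shows "convergent X" "X 0 \<le> lim X" "lim X \<le> B"
proof -
  obtain l where l: "X \<longlonglongrightarrow> l" "\<forall>i. X i \<le> l"
    using incseq_convergent[OF inc] bound by blast
  have "lim X = l" using l(1) by (rule limI)
  then show "convergent X" "X 0 \<le> lim X" "lim X \<le> B"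
    using l bound LIMSEQ_le_const2[OF l(1)] by (auto simp: convergent_def)
qed

lemma expected_beta_inf_bound:
  assumes N: "0 < N" and sym: "symmetric_edges N E" and q: "0 < q" "q < 1"
    and D: "\<And>v. v < N \<Longrightarrow> real (card {u. u < N \<and> E u v}) \<le> D"
    and x0: "\<And>v. v < N \<Longrightarrow> x0 v \<in> {0..L}"
  shows "convergent (expected_beta N E q x0) \<and> 0 \<le> expected_beta_inf N E q x0
        \<and> expected_beta_inf N E q x0 \<le> q * D * L\<^sup>2 / ((1 - q) * real N)"
proof -
  define \<alpha> where "\<alpha> = q * D / ((1 - q) * real N ^ 2)"
  define \<beta> where "\<beta> = (\<lambda>x. (x_ave N x - x_ave N x0)\<^sup>2)"
  define \<Phi> where "\<Phi> = (\<lambda>x. \<beta> x + \<alpha> * energy N x)"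
  let ?Ex = "\<lambda>f t. measure_pmf.expectation (bga_dist N E q x0 t) f"
  have eb: "expected_beta N E q x0 = ?Ex \<beta>"
    unfolding expected_beta_def \<beta>_def ..
  have \<alpha>_nonneg: "0 \<le> \<alpha>" unfolding \<alpha>_def using q D[of 0] N by simp
  have inc: "incseq (expected_beta N E q x0)"
    unfolding eb \<beta>_def
    by (rule expectation_bga_dist_incseq[OF N]) (simp add: step_mean_sq_deviation[OF N sym] sum_nonneg)
  have energy_x0: "energy N x0 \<le> real N * L\<^sup>2"
  proof -
    have "energy N x0 \<le> (\<Sum>u<N. L\<^sup>2)" unfolding energy_def
      using x0 by (intro sum_mono power_mono) auto
    thus ?thesis by simp
  qed
  have "\<Phi> x0 = \<alpha> * energy N x0" unfolding \<Phi>_def \<beta>_def by simp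
  also have "\<dots> \<le> \<alpha> * (real N * L\<^sup>2)" by (rule mult_left_mono[OF energy_x0 \<alpha>_nonneg])
  also have "\<dots> = q * D * L\<^sup>2 / ((1 - q) * real N)" unfolding \<alpha>_def using N q
    by (simp add: field_simps power2_eq_square)
  finally have \<Phi>_x0: "\<Phi> x0 \<le> q * D * L\<^sup>2 / ((1 - q) * real N)" .
  have bound: "expected_beta N E q x0 t \<le> q * D * L\<^sup>2 / ((1 - q) * real N)" for t
  proof -
    have "?Ex \<beta> t \<le> ?Ex \<Phi> t"
      unfolding \<Phi>_def using \<alpha>_nonneg
      by (intro integral_mono integrable_bga_dist N) (auto simp: energy_def sum_nonneg)
    also have "\<dots> \<le> \<Phi> x0"
      unfolding \<Phi>_def \<beta>_def
      by (rule expectation_bga_dist_le_initial[OF N])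
        (rule step_mean_lyapunov_le[OF N sym q D, folded \<alpha>_def])
    finally show ?thesis unfolding eb using \<Phi>_x0 by linarith
  qed
  have "0 \<le> expected_beta N E q x0 0" unfolding expected_beta_def by simp
  with incseq_bounded_lim[OF inc bound] show ?thesis
    unfolding expected_beta_inf_def by linarith
qed


section \<open>The spectral gap of a connected graph\<close>

definition trace_mat :: "'a::comm_ring_1 mat \<Rightarrow> 'a" where
  "trace_mat A = (\<Sum>i<dim_row A. A $$ (i, i))"

text \<open>The trace is invariant under cyclic permutation of a product; hence under similarity.\<close>
lemma trace_mat_mult_comm:
  fixes A B :: "'a::comm_ring_1 mat"
  assumes "A \<in> carrier_mat n n" "B \<in> carrier_mat n n"
  shows "trace_mat (A * B) = trace_mat (B * A)"
proof -
  have "trace_mat (A * B) = (\<Sum>i<n. \<Sum>j<n. A $$ (i, j) * B $$ (j, i))"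
    unfolding trace_mat_def using assms by (auto simp: scalar_prod_def lessThan_atLeast0 intro!: sum.cong)
  also have "\<dots> = (\<Sum>j<n. \<Sum>i<n. B $$ (j, i) * A $$ (i, j))"
    by (subst sum.swap) (simp add: mult.commute)
  also have "\<dots> = trace_mat (B * A)"
    unfolding trace_mat_def using assms by (auto simp: scalar_prod_def lessThan_atLeast0 intro!: sum.cong)
  finally show ?thesis .
qed

text \<open>A complex matrix whose only eigenvalue is 0 has trace 0: it is similar to
  an upper triangular matrix whose diagonal lists the eigenvalues.\<close>
lemma trace_mat_eq_0_if_spectrum_zero:
  fixes A :: "complex mat"
  assumes A: "A \<in> carrier_mat n n" and zero: "\<And>k. eigenvalue A k \<Longrightarrow> k = 0"
  shows "trace_mat A = 0"
proof -
  obtain es where cp: "char_poly A = (\<Prod>a\<leftarrow>es. [:- a, 1:])"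
    using char_poly_factorized[OF A] by blast
  obtain B P Q where sd: "schur_decomposition A es = (B, P, Q)"
    by (cases "schur_decomposition A es") auto
  from schur_decomposition[OF A cp sd]
  have sim: "similar_mat_wit A B P Q" and diag: "diag_mat B = es" by auto
  from sim A have carr: "B \<in> carrier_mat n n" "P \<in> carrier_mat n n" "Q \<in> carrier_mat n n"
    and QP: "Q * P = 1\<^sub>m n" and AB: "A = P * B * Q"
    unfolding similar_mat_wit_def Let_def by auto
  have "trace_mat A = trace_mat (P * (B * Q))" using AB carr by simp
  also have "\<dots> = trace_mat ((B * Q) * P)" by (rule trace_mat_mult_comm) (use carr in auto)
  also have "(B * Q) * P = B" using carr QP by simp
  finally have tr: "trace_mat A = trace_mat B" .
  have "B $$ (i, i) = 0" if i: "i < n" for i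
  proof -
    have "B $$ (i, i) \<in> set es" unfolding diag[symmetric] diag_mat_def using i carr by auto
    hence "poly (char_poly A) (B $$ (i, i)) = 0" unfolding cp by (rule linear_poly_root)
    thus ?thesis using eigenvalue_root_char_poly[OF A] zero by simp
  qed
  thus ?thesis unfolding tr unfolding trace_mat_def using carr by simp
qed

lemma eigenvalue_le_row_sum:
  fixes A :: "complex mat"
  assumes A: "A \<in> carrier_mat n n" and ev: "eigenvalue A k"
    and rows: "\<And>i. i < n \<Longrightarrow> (\<Sum>j<n. cmod (A $$ (i, j))) \<le> R"
  shows "cmod k \<le> R"
proof -
  obtain v where v: "v \<in> carrier_vec n" "v \<noteq> 0\<^sub>v n" "A *\<^sub>v v = k \<cdot>\<^sub>v v"
    using ev A unfolding eigenvalue_def eigenvector_def by auto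
  have "\<exists>j<n. v $ j \<noteq> 0"
  proof (rule ccontr)
    assume "\<not> (\<exists>j<n. v $ j \<noteq> 0)"
    then have "v = 0\<^sub>v n" using v(1) by (intro eq_vecI) auto
    with v(2) show False ..
  qed
  then obtain j0 where j0: "j0 < n" "v $ j0 \<noteq> 0" by blast
  define m where "m = Max ((\<lambda>j. cmod (v $ j)) ` {..<n})"
  have m_ge: "cmod (v $ j) \<le> m" if "j < n" for j unfolding m_def by (rule Max_ge) (use that in auto)
  have "m \<in> (\<lambda>j. cmod (v $ j)) ` {..<n}" unfolding m_def by (rule Max_in) (use j0 in auto)
  then obtain i where i: "i < n" "cmod (v $ i) = m" by auto
  have m_pos: "0 < m" using m_ge[OF j0(1)] j0(2) by (meson less_le_trans zero_less_norm_iff)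
  have "k * v $ i = (A *\<^sub>v v) $ i" using v i by simp
  also have "\<dots> = (\<Sum>j<n. A $$ (i, j) * v $ j)"
    using i A carrier_vecD[OF v(1)] by (simp add: scalar_prod_def lessThan_atLeast0)
  finally have row_i: "k * v $ i = (\<Sum>j<n. A $$ (i, j) * v $ j)" .
  have "cmod k * m = cmod (k * v $ i)" using i by (simp add: norm_mult)
  also have "\<dots> = cmod (\<Sum>j<n. A $$ (i, j) * v $ j)" by (simp only: row_i)
  also have "\<dots> \<le> (\<Sum>j<n. cmod (A $$ (i, j)) * m)"
    by (rule norm_sum[THEN order_trans], rule sum_mono)
      (use m_ge in \<open>auto simp: norm_mult intro: mult_left_mono\<close>)
  also have "\<dots> \<le> R * m" unfolding sum_distrib_right[symmetric]
    using rows[OF i(1)] m_pos by simp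
  finally show ?thesis using m_pos by simp
qed

lemma card_nbhd_le_deg_max:
  assumes "v < N"
  shows "card (out_nbhd N E v) \<le> deg_max N E" "card (in_nbhd N E v) \<le> deg_max N E"
proof -
  have "max (card (out_nbhd N E v)) (card (in_nbhd N E v)) \<le> deg_max N E"
    unfolding deg_max_def by (rule Max_ge) (use assms in auto)
  thus "card (out_nbhd N E v) \<le> deg_max N E" "card (in_nbhd N E v) \<le> deg_max N E" by auto
qed

abbreviation complex_laplacian :: "nat \<Rightarrow> (nat \<Rightarrow> nat \<Rightarrow> bool) \<Rightarrow> complex mat" where
  "complex_laplacian N E \<equiv> map_mat complex_of_real (laplacian N E)"

lemma complex_laplacian_carrier: "complex_laplacian N E \<in> carrier_mat N N"
  unfolding laplacian_def by simp

lemma complex_laplacian_index: "i < N \<Longrightarrow> j < N \<Longrightarrow> complex_laplacian N E $$ (i, j) =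
   complex_of_real ((if i = j then real (card (out_nbhd N E i)) else 0) - (if E i j then 1 else 0))"
  unfolding laplacian_def by simp

text \<open>Row i of the Laplacian has absolute sum at most out-degree plus in-degree.\<close>
lemma laplacian_eigenvalue_le:
  assumes "eigenvalue (complex_laplacian N E) k"
  shows "cmod k \<le> 2 * real (deg_max N E)"
proof (rule eigenvalue_le_row_sum[OF complex_laplacian_carrier assms])
  fix i assume i: "i < N"
  have "(\<Sum>j<N. cmod (complex_laplacian N E $$ (i, j)))
      \<le> (\<Sum>j<N. (if i = j then real (card (out_nbhd N E i)) else 0) + (if E i j then 1 else 0))"
  proof (rule sum_mono)
    fix j assume j: "j \<in> {..<N}"
    have "cmod (complex_laplacian N E $$ (i, j))
        = \<bar>(if i = j then real (card (out_nbhd N E i)) else 0) - (if E i j then 1 else 0)\<bar>"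
      using i j by (simp only: complex_laplacian_index norm_of_real lessThan_iff)
    also have "\<dots> \<le> (if i = j then real (card (out_nbhd N E i)) else 0) + (if E i j then 1 else 0)"
      by (rule abs_triangle_ineq4[THEN order_trans]) auto
    finally show "cmod (complex_laplacian N E $$ (i, j))
        \<le> (if i = j then real (card (out_nbhd N E i)) else 0) + (if E i j then 1 else 0)" .
  qed
  also have "\<dots> = real (card (out_nbhd N E i)) + real (card (in_nbhd N E i))"
    using i by (simp add: sum.distrib sum_indicator_card in_nbhd_def)
  also have "\<dots> \<le> 2 * real (deg_max N E)"
    using card_nbhd_le_deg_max[OF i, of E] by linarith
  finally show "(\<Sum>j<N. cmod (complex_laplacian N E $$ (i, j))) \<le> 2 * real (deg_max N E)" .
qed

lemma rtrancl_distinct_step: "(u, v) \<in> R\<^sup>* \<Longrightarrow> u \<noteq> v \<Longrightarrow> \<exists>a b. (a, b) \<in> R \<and> a \<noteq> b"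
  by (induction rule: rtrancl_induct) auto

text \<open>A connected graph on at least two vertices has an edge between distinct vertices, so its
  Laplacian has positive trace (diagonal entries count the non-loop edges into each vertex).\<close>
lemma laplacian_trace_nonzero:
  assumes conn: "connected_graph N E" and N2: "2 \<le> N"
  shows "trace_mat (complex_laplacian N E) \<noteq> 0"
proof -
  let ?R = "{(a, b). a < N \<and> b < N \<and> E a b}"
  have "(0, 1) \<in> ?R\<^sup>*" using conn N2 unfolding connected_graph_def by auto
  from rtrancl_distinct_step[OF this] obtain a b where ab: "a < N" "b < N" "E a b" "a \<noteq> b" by auto
  define d where "d i = real (card (out_nbhd N E i)) - (if E i i then 1 else 0)" for i
  have fin: "finite (out_nbhd N E i)" for i unfolding out_nbhd_def by auto
  have d_nonneg: "0 \<le> d i" if "i < N" for i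
  proof (cases "E i i")
    case True
    hence "i \<in> out_nbhd N E i" using that unfolding out_nbhd_def by auto
    hence "1 \<le> card (out_nbhd N E i)" using fin[of i] by (metis One_nat_def Suc_leI card_gt_0_iff empty_iff)
    thus ?thesis unfolding d_def using True by simp
  qed (simp add: d_def)
  have "card (if E b b then {a, b} else {a}) \<le> card (out_nbhd N E b)"
    by (rule card_mono[OF fin]) (use ab in \<open>auto simp: out_nbhd_def\<close>)
  hence "1 \<le> d b" unfolding d_def using ab(4) by (cases "E b b") auto
  moreover have "d b \<le> (\<Sum>i<N. d i)"
    by (rule member_le_sum) (use ab d_nonneg in auto)
  ultimately have pos: "0 < (\<Sum>i<N. d i)" by linarith
  have "trace_mat (complex_laplacian N E) = (\<Sum>i<N. complex_of_real (d i))"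
    unfolding trace_mat_def
    by (intro sum.cong) (auto simp: complex_laplacian_index d_def laplacian_def)
  also have "\<dots> = complex_of_real (\<Sum>i<N. d i)" by (rule of_real_sum[symmetric])
  finally show ?thesis using pos by (metis of_real_eq_0_iff less_irrefl)
qed

lemma spectral_gap_bounds:
  assumes conn: "connected_graph N E" and N2: "2 \<le> N"
  shows "0 < spectral_gap N E" "spectral_gap N E \<le> 2 * real (deg_max N E)"
proof -
  let ?M = "complex_laplacian N E"
  define S where "S = {cmod k | k. eigenvalue ?M k \<and> k \<noteq> 0}"
  have gap: "spectral_gap N E = Min S" unfolding spectral_gap_def S_def ..
  have "finite (spectrum ?M)" by (rule card_finite_spectrum[OF complex_laplacian_carrier])
  hence fin: "finite S" unfolding S_def spectrum_def
    by (rule finite_subset[rotated, OF finite_imageI[of _ cmod]]) auto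
  obtain k where k: "eigenvalue ?M k" "k \<noteq> 0"
    using trace_mat_eq_0_if_spectrum_zero[OF complex_laplacian_carrier] laplacian_trace_nonzero[OF conn N2]
    by blast
  have kS: "cmod k \<in> S" unfolding S_def using k by auto
  have "Min S \<in> S" by (rule Min_in[OF fin]) (use kS in auto)
  thus "0 < spectral_gap N E" unfolding gap S_def by auto
  have "Min S \<le> cmod k" by (rule Min_le[OF fin kS])
  thus "spectral_gap N E \<le> 2 * real (deg_max N E)" unfolding gap using laplacian_eigenvalue_le[OF k(1)] by linarith
qed

lemma deg_max_le_gap_ratio:
  assumes conn: "connected_graph N E" and N2: "2 \<le> N"
  shows "real (deg_max N E) \<le> 2 * (real (deg_max N E) ^ 2 / spectral_gap N E)"
proof -
  let ?D = "real (deg_max N E)" and ?g = "spectral_gap N E"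
  have g: "0 < ?g" "?g \<le> 2 * ?D" using spectral_gap_bounds[OF conn N2] by auto
  have "?D * ?g \<le> ?D * (2 * ?D)" by (rule mult_left_mono[OF g(2)]) simp
  thus ?thesis using g(1) by (simp add: field_simps power2_eq_square)
qed


theorem corollary1:
  fixes I :: "nat set" and E :: "nat \<Rightarrow> nat \<Rightarrow> nat \<Rightarrow> bool"
    and q L :: real and x0 :: "nat \<Rightarrow> nat \<Rightarrow> real"
  assumes graphs: "\<And>N. N \<in> I \<Longrightarrow> symmetric_graph N (E N) \<and> connected_graph N (E N)"
    and q: "0 < q" "q < 1"
    and init: "\<And>N v. N \<in> I \<Longrightarrow> v < N \<Longrightarrow> x0 N v \<in> {0..L}"
    and gap: "(\<lambda>N. real (deg_max N (E N)) ^ 2 / spectral_gap N (E N))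
              \<in> o[sequentially \<sqinter> principal I](\<lambda>N. real N)"
  shows "(\<forall>N\<in>I. convergent (expected_beta N (E N) q (x0 N))) \<and>
         ((\<lambda>N. expected_beta_inf N (E N) q (x0 N)) \<longlongrightarrow> 0) (sequentially \<sqinter> principal I)"
proof -
  let ?D = "\<lambda>N. real (deg_max N (E N))"
  let ?bias = "\<lambda>N. expected_beta_inf N (E N) q (x0 N)"
  define K where "K = q * L\<^sup>2 / (1 - q)"
  have per_graph: "convergent (expected_beta N (E N) q (x0 N)) \<and> 0 \<le> ?bias N
        \<and> ?bias N \<le> q * ?D N * L\<^sup>2 / ((1 - q) * real N)" if N: "N \<in> I" for N
    using graphs[OF N] q init[OF N] card_nbhd_le_deg_max(1)[of _ N "E N"]
    by (intro expected_beta_inf_bound)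
      (auto simp: connected_graph_def symmetric_graph_edges out_nbhd_def)
  have sandwich: "\<forall>\<^sub>F N in sequentially \<sqinter> principal I.
      0 \<le> ?bias N \<and> ?bias N \<le> 2 * K * (?D N ^ 2 / spectral_gap N (E N) / real N)"
    unfolding eventually_inf_principal
  proof (intro eventually_mono[OF eventually_ge_at_top[of 2]] impI)
    fix N :: nat assume N2: "2 \<le> N" and N: "N \<in> I"
    have "q * ?D N * L\<^sup>2 / ((1 - q) * real N) = K * (?D N / real N)"
      unfolding K_def using q by (simp add: field_simps)
    also have "\<dots> \<le> K * (2 * (?D N ^ 2 / spectral_gap N (E N)) / real N)"
      using deg_max_le_gap_ratio[OF conjunct2[OF graphs[OF N]] N2] q unfolding K_def
      by (intro mult_left_mono divide_right_mono) auto
    also have "\<dots> = 2 * K * (?D N ^ 2 / spectral_gap N (E N) / real N)" by simp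
    finally show "0 \<le> ?bias N \<and> ?bias N \<le> 2 * K * (?D N ^ 2 / spectral_gap N (E N) / real N)"
      using per_graph[OF N] by simp
  qed
  have upper_lim: "((\<lambda>N. 2 * K * (?D N ^ 2 / spectral_gap N (E N) / real N)) \<longlongrightarrow> 0) (sequentially \<sqinter> principal I)"
    using tendsto_mult_right_zero[OF smalloD_tendsto[OF gap]] by simp
  have "(?bias \<longlongrightarrow> 0) (sequentially \<sqinter> principal I)"
    by (rule tendsto_sandwich[OF _ _ tendsto_const upper_lim]) (use sandwich in \<open>auto elim: eventually_mono\<close>)
  with per_graph show ?thesis by blast
qed

end
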